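(* Let $p,d\ge1$ and $0\le r\le p$. For a $d$-tuple $\delta=(\sigma_1,\dots,\sigma_d)\in\mathbb P_p^d$ let $r(\delta)$ be the number of $s\in[p]$ such that $\{s\}$ is a block of every $\sigma_k$. Then $$\sum_{\delta=(\sigma_1,\dots,\sigma_d):\ \sigma_k>\dot0\ \forall k,\ r(\delta)=r}\ \prod_{k=1}^d|\mu(\dot0,\sigma_k)|\ \le\ \binom{p}{r}\,\big((p-r)!\big)^d.$$
   Context: $[p]=\{1,\dots,p\}$; $\mathbb P_p$ is the lattice of partitions of $[p]$ ordered by refinement, $\dot0$ the partition into singletons, $\sigma>\dot0$ means $\sigma\ne\dot0$. $\mu$ is the Möbius function of $\mathbb P_p$: $\mu(\rho,\rho)=1$ and $\sum_{\rho\le\tau\le\sigma}\mu(\rho,\tau)=0$ for $\rho<\sigma$. *)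

theory Defs
  imports Main "HOL-Library.Disjoint_Sets" "HOL-Library.FuncSet"
begin

definition Part :: "nat \<Rightarrow> nat set set set" where
  "Part p = {P. partition_on {1..p} P}"

definition zeroPart :: "nat \<Rightarrow> nat set set" where
  "zeroPart p = (\<lambda>s. {s}) ` {1..p}"

lemma finite_below: "finite {\<tau>. refines {1..(p::nat)} \<tau> \<sigma>}"
proof (rule finite_subset)
  show "{\<tau>. refines {1..p} \<tau> \<sigma>} \<subseteq> {P. partition_on {1..(p::nat)} P}"
    by (auto simp: refines_def)
  show "finite {P. partition_on {1..(p::nat)} P}"
    by (rule finitely_many_partition_on) simp
qed

function mobius :: "nat \<Rightarrow> nat set set \<Rightarrow> nat set set \<Rightarrow> int" where
  "mobius p \<rho> \<sigma> =
     (if \<rho> = \<sigma> then 1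
      else if refines {1..p} \<rho> \<sigma>
      then - (\<Sum>\<tau> \<in> {\<tau>. refines {1..p} \<rho> \<tau> \<and> refines {1..p} \<tau> \<sigma> \<and> \<tau> \<noteq> \<sigma>}. mobius p \<rho> \<tau>)
      else 0)"
  by auto
termination
proof (relation "measure (\<lambda>(p, \<rho>, \<sigma>). card {\<tau>. refines {1..p} \<tau> \<sigma>})", simp)
  fix p :: nat and \<rho> \<sigma> \<tau> :: "nat set set"
  assume t: "\<tau> \<in> {\<tau>. refines {1..p} \<rho> \<tau> \<and> refines {1..p} \<tau> \<sigma> \<and> \<tau> \<noteq> \<sigma>}"
  have "{\<tau>'. refines {1..p} \<tau>' \<tau>} \<subset> {\<tau>'. refines {1..p} \<tau>' \<sigma>}"
  proof
    show "{\<tau>'. refines {1..p} \<tau>' \<tau>} \<subseteq> {\<tau>'. refines {1..p} \<tau>' \<sigma>}"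
      using t refines_trans by blast
    have "refines {1..p} \<sigma> \<sigma>" using t unfolding refines_def by blast
    moreover have "\<not> refines {1..p} \<sigma> \<tau>" using t refines_asym by blast
    ultimately show "{\<tau>'. refines {1..p} \<tau>' \<tau>} \<noteq> {\<tau>'. refines {1..p} \<tau>' \<sigma>}" by blast
  qed
  then show "((p, \<rho>, \<tau>), p, \<rho>, \<sigma>) \<in> measure (\<lambda>(p, \<rho>, \<sigma>). card {\<tau>. refines {1..p} \<tau> \<sigma>})"
    using psubset_card_mono[OF finite_below] by simp
qed

declare mobius.simps [simp del]

definition rfix :: "nat \<Rightarrow> nat \<Rightarrow> (nat \<Rightarrow> nat set set) \<Rightarrow> nat" where
  "rfix p d \<delta> = card {s \<in> {1..p}. \<forall>k \<in> {1..d}. {s} \<in> \<delta> k}"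

end

theory Submission
  imports Defs "HOL-Computational_Algebra.Primes"
begin

(* Let w_h(sigma) be the product of h(|B|) over the blocks B of sigma. Splitting off the block
   that contains a fixed point gives a binomial recursion for the sum of w_h over all partitions
   of an n-set: for h(k) = (k-1)! the sum is n!, for h(k) = (-1)^(k-1) (k-1)! it vanishes when
   n >= 2. As the partitions below sigma are the pairs (partition of a block B, partition below
   sigma - {B}), the latter weight satisfies the defining recursion of mu(0, -), whence
   |mu(0, sigma)| = prod (|B|-1)!.
   Grouping the tuples delta by their set S of common singleton blocks and dropping the
   conditions sigma_k > 0 and "exactly S" only enlarges the sum, which then factors into d sums
   over partitions of the p - r points outside S, each equal to (p - r)!. *)

definition block_weight :: "(nat \<Rightarrow> 'b::comm_monoid_mult) \<Rightarrow> 'a set set \<Rightarrow> 'b" where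
  "block_weight h P = (\<Prod>B\<in>P. h (card B))"

lemma partition_on_Un:
  assumes "partition_on A P" "partition_on B Q" "A \<inter> B = {}"
  shows "partition_on (A \<union> B) (P \<union> Q)"
  using assms by (auto simp: partition_on_def intro: disjoint_union)

lemma partition_on_Diff:
  assumes "partition_on A P" "Q \<subseteq> P"
  shows "partition_on (A - \<Union>Q) (P - Q)"
proof -
  have "\<Union>P - \<Union>Q = \<Union>(P - Q)"
    using assms by (intro diff_Union_pairwise_disjoint) (auto simp: partition_on_def)
  with assms show ?thesis
    by (auto simp: partition_on_def pairwise_def)
qed

lemma partition_on_block_containing:
  assumes "partition_on A P" "x \<in> A"
  obtains C where "C \<in> P" "x \<in> C" "{C \<in> P. x \<in> C} = {C}"
proof -
  obtain C where C: "C \<in> P" "x \<in> C"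
    using assms by (auto simp: partition_on_def)
  moreover have "C' = C" if "C' \<in> P" "x \<in> C'" for C'
    using assms(1) C that by (auto simp: partition_on_def dest: disjointD)
  ultimately show ?thesis
    using that by blast
qed

lemma bij_betw_partition_on_block_containing:
  assumes "x \<in> B"
  shows "bij_betw (\<lambda>(D, Q). insert (insert x D) Q)
    (SIGMA D:Pow (B - {x}). {Q. partition_on (B - insert x D) Q}) {P. partition_on B P}"
proof -
  define block where "block P = the_elem {C \<in> P. x \<in> C}" for P :: "'a set set"
  have block_insert: "block (insert (insert x D) Q) = insert x D"
    if "partition_on (B - insert x D) Q" for D Q
  proof -
    have "{C \<in> insert (insert x D) Q. x \<in> C} = {insert x D}"
      using that by (auto simp: partition_on_def)
    then show ?thesis by (simp add: block_def)
  qed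
  have block: "block P \<in> P" "x \<in> block P" if "partition_on B P" for P
    using partition_on_block_containing[OF that assms] by (metis block_def the_elem_eq)+
  show ?thesis
  proof (rule bij_betw_byWitness[where f' = "\<lambda>P. (block P - {x}, P - {block P})"])
    show "\<forall>P\<in>{P. partition_on B P}. (\<lambda>(D, Q). insert (insert x D) Q) (block P - {x}, P - {block P}) = P"
      using block by (auto simp: insert_absorb)
    show "(\<lambda>P. (block P - {x}, P - {block P})) ` {P. partition_on B P}
        \<subseteq> (SIGMA D:Pow (B - {x}). {Q. partition_on (B - insert x D) Q})"
    proof (rule image_subsetI)
      fix P assume "P \<in> {P. partition_on B P}"
      then have P: "partition_on B P" by simp
      then have "block P \<subseteq> B" "partition_on (B - \<Union>{block P}) (P - {block P})"
        using block[OF P] partition_on_Diff[OF P] by (auto simp: partition_on_def)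
      then show "(block P - {x}, P - {block P}) \<in> (SIGMA D:Pow (B - {x}). {Q. partition_on (B - insert x D) Q})"
        using block[OF P] by (auto simp: insert_absorb)
    qed
    show "\<forall>DQ\<in>SIGMA D:Pow (B - {x}). {Q. partition_on (B - insert x D) Q}.
        (\<lambda>P. (block P - {x}, P - {block P})) ((\<lambda>(D, Q). insert (insert x D) Q) DQ) = DQ"
      using block_insert by (fastforce simp: partition_on_def)
    show "(\<lambda>(D, Q). insert (insert x D) Q) ` (SIGMA D:Pow (B - {x}). {Q. partition_on (B - insert x D) Q})
        \<subseteq> {P. partition_on B P}"
    proof clarify
      fix D Q assume D: "D \<subseteq> B - {x}" and Q: "partition_on (B - insert x D) Q"
      then have "disjnt (insert x D) (\<Union>Q)"
        by (auto simp: partition_on_def disjnt_def)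
      with D Q assms show "partition_on B (insert (insert x D) Q)"
        by (auto simp: partition_on_insert)
    qed
  qed
qed

lemma sum_partition_on_block_containing:
  assumes "finite B" "x \<in> B"
  shows "(\<Sum>P | partition_on B P. F P) =
    (\<Sum>D\<in>Pow (B - {x}). \<Sum>Q | partition_on (B - insert x D) Q. F (insert (insert x D) Q))"
proof -
  have "(\<Sum>P | partition_on B P. F P) =
      (\<Sum>(D, Q)\<in>(SIGMA D:Pow (B - {x}). {Q. partition_on (B - insert x D) Q}). F (insert (insert x D) Q))"
    using sum.reindex_bij_betw[OF bij_betw_partition_on_block_containing[OF assms(2)], of F]
    by (simp add: split_def)
  also have "\<dots> = (\<Sum>D\<in>Pow (B - {x}). \<Sum>Q | partition_on (B - insert x D) Q. F (insert (insert x D) Q))"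
    using assms(1) by (subst sum.Sigma) (auto intro: finitely_many_partition_on)
  finally show ?thesis .
qed

lemma sum_Pow_card:
  fixes f :: "nat \<Rightarrow> 'b::semiring_1"
  assumes "finite E"
  shows "(\<Sum>D\<in>Pow E. f (card D)) = (\<Sum>k\<le>card E. of_nat (card E choose k) * f k)"
proof -
  have "(\<Sum>D\<in>Pow E. f (card D)) = (\<Sum>k\<le>card E. \<Sum>D | D \<in> Pow E \<and> card D = k. f (card D))"
    using assms by (intro sum.group[symmetric]) (auto simp: card_mono)
  also have "\<dots> = (\<Sum>k\<le>card E. of_nat (card E choose k) * f k)"
    using n_subsets[OF assms] by (intro sum.cong) auto
  finally show ?thesis .
qed

lemma sum_block_weight_partition_on:
  fixes h F :: "nat \<Rightarrow> 'b::comm_semiring_1"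
  assumes F_0: "F 0 = 1"
    and F_Suc: "\<And>n. F (Suc n) = (\<Sum>k\<le>n. of_nat (n choose k) * h (Suc k) * F (n - k))"
    and "finite B"
  shows "(\<Sum>P | partition_on B P. block_weight h P) = F (card B)"
  using assms(3)
proof (induction "card B" arbitrary: B rule: less_induct)
  case less
  show ?case
  proof (cases "B = {}")
    case True
    then have "{P. partition_on B P} = {{}}"
      by (auto simp: partition_on_empty)
    then show ?thesis
      using True by (simp add: block_weight_def F_0)
  next
    case False
    then obtain x where x: "x \<in> B" by blast
    define n where "n = card (B - {x})"
    have card_B: "card B = Suc n"
      unfolding n_def using card_Suc_Diff1[OF less.prems x] by (rule sym)
    have "(\<Sum>P | partition_on B P. block_weight h P) =
      (\<Sum>D\<in>Pow (B - {x}). \<Sum>Q | partition_on (B - insert x D) Q. block_weight h (insert (insert x D) Q))"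
      by (rule sum_partition_on_block_containing[OF less.prems x])
    also have "\<dots> = (\<Sum>D\<in>Pow (B - {x}). h (Suc (card D)) * F (n - card D))"
    proof (rule sum.cong[OF refl])
      fix D assume D: "D \<in> Pow (B - {x})"
      then have D_fin: "finite D" "x \<notin> D"
        using less.prems finite_subset by auto
      have card_rest: "card (B - insert x D) = n - card D"
        using D D_fin less.prems x card_B by (subst card_Diff_subset) auto
      have "(\<Sum>Q | partition_on (B - insert x D) Q. block_weight h (insert (insert x D) Q))
          = h (Suc (card D)) * (\<Sum>Q | partition_on (B - insert x D) Q. block_weight h Q)"
        unfolding sum_distrib_left
      proof (rule sum.cong[OF refl])
        fix Q assume "Q \<in> {Q. partition_on (B - insert x D) Q}"
        then have "finite Q" "insert x D \<notin> Q"
          using less.prems D by (auto intro: finite_elements simp: partition_on_def)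
        then show "block_weight h (insert (insert x D) Q) = h (Suc (card D)) * block_weight h Q"
          using D_fin by (simp add: block_weight_def)
      qed
      also have "\<dots> = h (Suc (card D)) * F (n - card D)"
        using less.hyps[of "B - insert x D"] less.prems card_rest card_B by simp
      finally show "(\<Sum>Q | partition_on (B - insert x D) Q. block_weight h (insert (insert x D) Q))
          = h (Suc (card D)) * F (n - card D)" .
    qed
    also have "\<dots> = (\<Sum>k\<le>n. of_nat (n choose k) * (h (Suc k) * F (n - k)))"
      using sum_Pow_card[of "B - {x}" "\<lambda>k. h (Suc k) * F (n - k)"] less.prems
      unfolding n_def by simp
    also have "\<dots> = F (card B)"
      unfolding card_B F_Suc by (simp add: mult.assoc)
    finally show ?thesis .
  qed
qed

lemma sum_block_weight_fact:
  assumes "finite B"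
  shows "(\<Sum>P | partition_on B P. block_weight (\<lambda>k. fact (k - 1)) P) =
    (fact (card B) :: 'b::{comm_semiring_1, semiring_char_0})"
proof (rule sum_block_weight_partition_on[OF _ _ assms])
  fix n
  have "(\<Sum>k\<le>n. of_nat (n choose k) * fact (Suc k - 1) * fact (n - k)) = (\<Sum>k\<le>n. (fact n :: 'b))"
  proof (rule sum.cong[OF refl])
    fix k assume "k \<in> {..n}"
    then have "of_nat (fact k * fact (n - k) * (n choose k)) = (of_nat (fact n) :: 'b)"
      by (simp add: binomial_fact_lemma)
    then show "of_nat (n choose k) * fact (Suc k - 1) * fact (n - k) = (fact n :: 'b)"
      by (simp add: ac_simps)
  qed
  then show "fact (Suc n) = (\<Sum>k\<le>n. of_nat (n choose k) * fact (Suc k - 1) * (fact (n - k) :: 'b))"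
    by (simp add: algebra_simps)
qed simp

(* The value mu(0, 1) of the partition lattice of a k-element set. *)
definition mobius_block :: "nat \<Rightarrow> int" where
  "mobius_block k = (-1) ^ (k - 1) * fact (k - 1)"

lemma sum_block_weight_mobius_block:
  assumes "finite B"
  shows "(\<Sum>P | partition_on B P. block_weight mobius_block P) = of_bool (card B \<le> 1)"
proof (rule sum_block_weight_partition_on[OF _ _ assms])
  fix n
  show "of_bool (Suc n \<le> 1) = (\<Sum>k\<le>n. of_nat (n choose k) * mobius_block (Suc k) * of_bool (n - k \<le> 1))"
  proof (cases n)
    case 0
    then show ?thesis by (simp add: mobius_block_def)
  next
    case (Suc m)
    let ?t = "\<lambda>k. of_nat (n choose k) * mobius_block (Suc k) * of_bool (n - k \<le> 1)"
    have "(\<Sum>k<m. ?t k) = 0"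
      using Suc by (intro sum.neutral) auto
    then have "(\<Sum>k\<le>n. ?t k) = ?t m + ?t (Suc m)"
      by (simp add: Suc lessThan_Suc_atMost[symmetric])
    also have "\<dots> = 0"
      using Suc by (simp add: mobius_block_def algebra_simps)
    finally show ?thesis
      using Suc by simp
  qed
qed simp

lemma partition_on_obtain_nonsingleton_block:
  assumes "finite A" "partition_on A \<sigma>" "\<sigma> \<noteq> (\<lambda>s. {s}) ` A"
  obtains B where "B \<in> \<sigma>" "2 \<le> card B"
proof -
  have "\<exists>B\<in>\<sigma>. 2 \<le> card B"
  proof (rule ccontr)
    assume "\<not> (\<exists>B\<in>\<sigma>. 2 \<le> card B)"
    then have singleton: "\<exists>s. B = {s}" if B: "B \<in> \<sigma>" for B
    proof -
      have "B \<subseteq> A" "B \<noteq> {}"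
        using B assms(2) by (auto simp: partition_on_def)
      then have "0 < card B"
        using assms(1) finite_subset by fastforce
      with B \<open>\<not> (\<exists>B\<in>\<sigma>. 2 \<le> card B)\<close> have "card B = 1"
        by fastforce
      then show ?thesis
        by (simp add: card_1_singleton_iff)
    qed
    have "\<sigma> = (\<lambda>s. {s}) ` \<Union>\<sigma>"
    proof (intro equalityI subsetI)
      fix X assume "X \<in> \<sigma>"
      with singleton show "X \<in> (\<lambda>s. {s}) ` \<Union>\<sigma>"
        by blast
    next
      fix X assume "X \<in> (\<lambda>s. {s}) ` \<Union>\<sigma>"
      then obtain s Y where "X = {s}" "s \<in> Y" "Y \<in> \<sigma>"
        by blast
      with singleton show "X \<in> \<sigma>"
        by force
    qed
    with assms(2,3) show False
      by (simp add: partition_on_def)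
  qed
  with that show ?thesis
    by blast
qed

lemma bij_betw_refines_split_block:
  assumes "partition_on A \<sigma>" "B \<in> \<sigma>"
  shows "bij_betw (\<lambda>\<tau>. (\<tau> \<inter> Pow B, \<tau> - Pow B)) {\<tau>. refines A \<tau> \<sigma>}
    ({P. partition_on B P} \<times> {\<tau>. refines (A - B) \<tau> (\<sigma> - {B})})"
proof (rule bij_betw_byWitness[where f' = "\<lambda>(P, \<tau>). P \<union> \<tau>"])
  have \<sigma>': "partition_on (A - B) (\<sigma> - {B})"
    using partition_on_Diff[OF assms(1), of "{B}"] assms(2) by simp
  show "\<forall>\<tau>\<in>{\<tau>. refines A \<tau> \<sigma>}. (\<lambda>(P, \<tau>). P \<union> \<tau>) (\<tau> \<inter> Pow B, \<tau> - Pow B) = \<tau>"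
    by auto
  show "(\<lambda>\<tau>. (\<tau> \<inter> Pow B, \<tau> - Pow B)) ` {\<tau>. refines A \<tau> \<sigma>}
      \<subseteq> {P. partition_on B P} \<times> {\<tau>. refines (A - B) \<tau> (\<sigma> - {B})}"
  proof (rule image_subsetI)
    fix \<tau> assume "\<tau> \<in> {\<tau>. refines A \<tau> \<sigma>}"
    then have ref: "refines A \<tau> \<sigma>" by simp
    then have P: "partition_on B (\<tau> \<inter> Pow B)"
      using refines_obtains_subset[OF ref assms(2)] by (simp add: Int_def)
    have "partition_on (A - \<Union>(\<tau> \<inter> Pow B)) (\<tau> - (\<tau> \<inter> Pow B))"
      using ref by (intro partition_on_Diff) (auto simp: refines_def)
    then have "partition_on (A - B) (\<tau> - Pow B)"
      using P by (simp add: partition_on_def Diff_Int)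
    moreover have "\<exists>Y\<in>\<sigma> - {B}. X \<subseteq> Y" if X: "X \<in> \<tau> - Pow B" for X
    proof -
      obtain Y where "Y \<in> \<sigma>" "X \<subseteq> Y"
        using ref X by (auto simp: refines_def)
      moreover have "Y \<noteq> B"
        using X \<open>X \<subseteq> Y\<close> by auto
      ultimately show ?thesis by blast
    qed
    ultimately show "(\<tau> \<inter> Pow B, \<tau> - Pow B)
        \<in> {P. partition_on B P} \<times> {\<tau>. refines (A - B) \<tau> (\<sigma> - {B})}"
      using P \<sigma>' by (simp add: refines_def)
  qed
  have blocks: "P \<subseteq> Pow B" if "partition_on B P" for P
    using that by (auto simp: partition_on_def)
  have nonblocks: "\<tau> \<inter> Pow B = {}" if "refines (A - B) \<tau> (\<sigma> - {B})" for \<tau>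
  proof -
    have \<tau>: "\<Union>\<tau> = A - B" "{} \<notin> \<tau>"
      using that by (auto simp: refines_def partition_on_def)
    show ?thesis
    proof (rule ccontr)
      assume "\<tau> \<inter> Pow B \<noteq> {}"
      then obtain X where X: "X \<in> \<tau>" "X \<subseteq> B"
        by auto
      moreover obtain x where "x \<in> X"
        using X(1) \<tau>(2) by (metis ex_in_conv)
      ultimately show False
        using \<tau>(1) by blast
    qed
  qed
  have "((P \<union> \<tau>) \<inter> Pow B, P \<union> \<tau> - Pow B) = (P, \<tau>)"
    if "partition_on B P" "refines (A - B) \<tau> (\<sigma> - {B})" for P \<tau>
    using blocks[OF that(1)] nonblocks[OF that(2)] by blast
  then show "\<forall>P\<tau>\<in>{P. partition_on B P} \<times> {\<tau>. refines (A - B) \<tau> (\<sigma> - {B})}.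
      (\<lambda>\<tau>. (\<tau> \<inter> Pow B, \<tau> - Pow B)) ((\<lambda>(P, \<tau>). P \<union> \<tau>) P\<tau>) = P\<tau>"
    by auto
  show "(\<lambda>(P, \<tau>). P \<union> \<tau>) ` ({P. partition_on B P} \<times> {\<tau>. refines (A - B) \<tau> (\<sigma> - {B})})
      \<subseteq> {\<tau>. refines A \<tau> \<sigma>}"
  proof clarify
    fix P \<tau> assume P: "partition_on B P" and \<tau>: "refines (A - B) \<tau> (\<sigma> - {B})"
    have "partition_on (B \<union> (A - B)) (P \<union> \<tau>)"
      using P \<tau> by (intro partition_on_Un) (auto simp: refines_def)
    moreover have "B \<union> (A - B) = A"
      using assms by (auto simp: partition_on_def)
    ultimately show "refines A (P \<union> \<tau>) \<sigma>"
      using assms blocks[OF P] \<tau> by (auto simp: refines_def)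
  qed
qed

lemma sum_refines_split_block:
  fixes h :: "nat \<Rightarrow> 'b::comm_semiring_1"
  assumes "finite A" "partition_on A \<sigma>" "B \<in> \<sigma>"
  shows "(\<Sum>\<tau> | refines A \<tau> \<sigma>. block_weight h \<tau>) =
    (\<Sum>P | partition_on B P. block_weight h P) * (\<Sum>\<tau> | refines (A - B) \<tau> (\<sigma> - {B}). block_weight h \<tau>)"
proof -
  have "block_weight h \<tau> = block_weight h (\<tau> \<inter> Pow B) * block_weight h (\<tau> - Pow B)"
    if "refines A \<tau> \<sigma>" for \<tau>
  proof -
    have "finite \<tau>"
      using finite_elements[OF assms(1)] that by (simp add: refines_def)
    then show ?thesis
      by (simp add: block_weight_def prod.Int_Diff)
  qed
  then have "(\<Sum>\<tau> | refines A \<tau> \<sigma>. block_weight h \<tau>) =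
      (\<Sum>\<tau> | refines A \<tau> \<sigma>. (\<lambda>(P, \<tau>'). block_weight h P * block_weight h \<tau>') (\<tau> \<inter> Pow B, \<tau> - Pow B))"
    by simp
  also have "\<dots> = (\<Sum>(P, \<tau>)\<in>{P. partition_on B P} \<times> {\<tau>. refines (A - B) \<tau> (\<sigma> - {B})}.
      block_weight h P * block_weight h \<tau>)"
    by (rule sum.reindex_bij_betw[OF bij_betw_refines_split_block[OF assms(2,3)]])
  finally show ?thesis
    by (simp add: sum_product sum.cartesian_product)
qed

lemma sum_refines_block_weight_mobius_block:
  assumes "finite A" "partition_on A \<sigma>" "\<sigma> \<noteq> (\<lambda>s. {s}) ` A"
  shows "(\<Sum>\<tau> | refines A \<tau> \<sigma>. block_weight mobius_block \<tau>) = 0"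
proof -
  obtain B where B: "B \<in> \<sigma>" "2 \<le> card B"
    using partition_on_obtain_nonsingleton_block[OF assms] .
  have "B \<subseteq> A"
    using B(1) assms(2) by (auto simp: partition_on_def)
  then have "finite B"
    using assms(1) finite_subset by blast
  then have "(\<Sum>P | partition_on B P. block_weight mobius_block P) = 0"
    using B(2) by (simp add: sum_block_weight_mobius_block)
  then show ?thesis
    using sum_refines_split_block[OF assms(1,2) B(1), where h = mobius_block] by simp
qed

lemma singletons_refines:
  assumes "partition_on A \<sigma>"
  shows "refines A ((\<lambda>s. {s}) ` A) \<sigma>"
  using assms partition_on_singletons[of A] by (auto simp: refines_def partition_on_def)

lemma mobius_eqI:
  fixes g :: "nat set set \<Rightarrow> int"
  assumes g_\<rho>: "g \<rho> = 1"
    and g_sum: "\<And>\<sigma>. refines {1..p} \<rho> \<sigma> \<Longrightarrow> \<sigma> \<noteq> \<rho> \<Longrightarrow>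
      (\<Sum>\<tau> | refines {1..p} \<rho> \<tau> \<and> refines {1..p} \<tau> \<sigma>. g \<tau>) = 0"
    and "refines {1..p} \<rho> \<sigma>"
  shows "mobius p \<rho> \<sigma> = g \<sigma>"
  using assms(3)
proof (induction "card {\<tau>. refines {1..p} \<tau> \<sigma>}" arbitrary: \<sigma> rule: less_induct)
  case less
  show ?case
  proof (cases "\<sigma> = \<rho>")
    case True
    with g_\<rho> show ?thesis
      by (simp add: mobius.simps)
  next
    case False
    let ?I = "{\<tau>. refines {1..p} \<rho> \<tau> \<and> refines {1..p} \<tau> \<sigma> \<and> \<tau> \<noteq> \<sigma>}"
    have "mobius p \<rho> \<sigma> = - (\<Sum>\<tau>\<in>?I. mobius p \<rho> \<tau>)"
      using False less.prems by (subst mobius.simps) simp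
    also have "(\<Sum>\<tau>\<in>?I. mobius p \<rho> \<tau>) = (\<Sum>\<tau>\<in>?I. g \<tau>)"
    proof (rule sum.cong[OF refl])
      fix \<tau> assume \<tau>: "\<tau> \<in> ?I"
      have "{\<tau>'. refines {1..p} \<tau>' \<tau>} \<subset> {\<tau>'. refines {1..p} \<tau>' \<sigma>}"
      proof
        show "{\<tau>'. refines {1..p} \<tau>' \<tau>} \<subseteq> {\<tau>'. refines {1..p} \<tau>' \<sigma>}"
          using \<tau> refines_trans by blast
        have "refines {1..p} \<sigma> \<sigma>"
          using \<tau> by (auto simp: refines_def)
        moreover have "\<not> refines {1..p} \<sigma> \<tau>"
          using \<tau> refines_asym by blast
        ultimately show "{\<tau>'. refines {1..p} \<tau>' \<tau>} \<noteq> {\<tau>'. refines {1..p} \<tau>' \<sigma>}"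
          by blast
      qed
      then have "card {\<tau>'. refines {1..p} \<tau>' \<tau>} < card {\<tau>'. refines {1..p} \<tau>' \<sigma>}"
        by (rule psubset_card_mono[OF finite_below])
      with \<tau> show "mobius p \<rho> \<tau> = g \<tau>"
        using less.hyps by blast
    qed
    also have "(\<Sum>\<tau>\<in>?I. g \<tau>) = - g \<sigma>"
    proof -
      have "{\<tau>. refines {1..p} \<rho> \<tau> \<and> refines {1..p} \<tau> \<sigma>} = insert \<sigma> ?I"
        using less.prems by (auto simp: refines_def)
      moreover have "finite ?I"
        by (rule finite_subset[OF _ finite_below]) blast
      ultimately show ?thesis
        using g_sum[OF less.prems False] by simp
    qed
    finally show ?thesis
      by simp
  qed
qed

lemma mobius_zeroPart:
  assumes "\<sigma> \<in> Part p"
  shows "mobius p (zeroPart p) \<sigma> = block_weight mobius_block \<sigma>"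
proof (rule mobius_eqI)
  show "block_weight mobius_block (zeroPart p) = 1"
    by (simp add: block_weight_def zeroPart_def mobius_block_def prod.neutral)
  show "refines {1..p} (zeroPart p) \<sigma>"
    using assms by (simp add: Part_def zeroPart_def singletons_refines)
  fix \<sigma>' assume \<sigma>': "refines {1..p} (zeroPart p) \<sigma>'" "\<sigma>' \<noteq> zeroPart p"
  have "refines {1..p} (zeroPart p) \<tau>" if "refines {1..p} \<tau> \<sigma>'" for \<tau>
    unfolding zeroPart_def by (rule singletons_refines) (use that in \<open>simp add: refines_def\<close>)
  then have "{\<tau>. refines {1..p} (zeroPart p) \<tau> \<and> refines {1..p} \<tau> \<sigma>'} = {\<tau>. refines {1..p} \<tau> \<sigma>'}"
    by blast
  moreover have "(\<Sum>\<tau> | refines {1..p} \<tau> \<sigma>'. block_weight mobius_block \<tau>) = 0"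
    using \<sigma>' by (intro sum_refines_block_weight_mobius_block) (auto simp: refines_def zeroPart_def)
  ultimately show "(\<Sum>\<tau> | refines {1..p} (zeroPart p) \<tau> \<and> refines {1..p} \<tau> \<sigma>'.
      block_weight mobius_block \<tau>) = 0"
    by simp
qed

lemma abs_mobius_zeroPart:
  assumes "\<sigma> \<in> Part p"
  shows "\<bar>mobius p (zeroPart p) \<sigma>\<bar> = block_weight (\<lambda>k. fact (k - 1)) \<sigma>"
  by (simp add: mobius_zeroPart[OF assms] block_weight_def mobius_block_def abs_prod abs_mult)

lemma sum_partition_on_containing_singletons:
  fixes h :: "nat \<Rightarrow> 'b::comm_semiring_1"
  assumes "finite A" "S \<subseteq> A" "h 1 = 1"
  shows "(\<Sum>\<sigma> | partition_on A \<sigma> \<and> (\<forall>s\<in>S. {s} \<in> \<sigma>). block_weight h \<sigma>) =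
    (\<Sum>Q | partition_on (A - S) Q. block_weight h Q)"
proof -
  let ?sg = "(\<lambda>s. {s}) ` S"
  have disj: "Q \<inter> ?sg = {}" if "partition_on (A - S) Q" for Q
    using that by (auto simp: partition_on_def)
  have "block_weight h ?sg = 1"
    using assms(3) by (simp add: block_weight_def prod.neutral)
  then have weight: "block_weight h (Q \<union> ?sg) = block_weight h Q" if "partition_on (A - S) Q" for Q
    using that disj[OF that] assms(1,2) finite_subset[OF assms(2,1)] finite_elements[of "A - S" Q]
    by (simp add: block_weight_def prod.union_disjoint)
  show ?thesis
  proof (rule sum.reindex_bij_witness[where i = "\<lambda>\<sigma>. \<sigma> - ?sg" and j = "\<lambda>Q. Q \<union> ?sg", symmetric])
    fix Q assume "Q \<in> {Q. partition_on (A - S) Q}"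
    then have Q: "partition_on (A - S) Q" by simp
    show "Q \<union> ?sg - ?sg = Q"
      using disj[OF Q] by blast
    show "block_weight h (Q \<union> ?sg) = block_weight h Q"
      using weight[OF Q] .
    have "partition_on ((A - S) \<union> S) (Q \<union> ?sg)"
      using Q partition_on_singletons by (rule partition_on_Un) blast
    then show "Q \<union> ?sg \<in> {\<sigma>. partition_on A \<sigma> \<and> (\<forall>s\<in>S. {s} \<in> \<sigma>)}"
      using assms(2) by (simp add: Un_absorb2)
  next
    fix \<sigma> assume "\<sigma> \<in> {\<sigma>. partition_on A \<sigma> \<and> (\<forall>s\<in>S. {s} \<in> \<sigma>)}"
    then have \<sigma>: "partition_on A \<sigma>" "?sg \<subseteq> \<sigma>" by auto
    then show "\<sigma> - ?sg \<union> ?sg = \<sigma>"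
      by blast
    have "partition_on (A - \<Union>?sg) (\<sigma> - ?sg)"
      by (rule partition_on_Diff[OF \<sigma>])
    then show "\<sigma> - ?sg \<in> {Q. partition_on (A - S) Q}"
      by simp
  qed
qed

lemma sum_abs_mobius_zeroPart_containing_singletons:
  assumes "S \<subseteq> {1..p}"
  shows "(\<Sum>\<sigma> | \<sigma> \<in> Part p \<and> (\<forall>s\<in>S. {s} \<in> \<sigma>). \<bar>mobius p (zeroPart p) \<sigma>\<bar>) =
    fact (p - card S)"
proof -
  have "(\<Sum>\<sigma> | \<sigma> \<in> Part p \<and> (\<forall>s\<in>S. {s} \<in> \<sigma>). \<bar>mobius p (zeroPart p) \<sigma>\<bar>) =
      (\<Sum>\<sigma> | partition_on {1..p} \<sigma> \<and> (\<forall>s\<in>S. {s} \<in> \<sigma>). block_weight (\<lambda>k. fact (k - 1)) \<sigma>)"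
    by (intro sum.cong) (auto simp: Part_def abs_mobius_zeroPart)
  also have "\<dots> = (\<Sum>Q | partition_on ({1..p} - S) Q. block_weight (\<lambda>k. fact (k - 1)) Q)"
    using assms by (intro sum_partition_on_containing_singletons) auto
  also have "\<dots> = fact (card ({1..p} - S))"
    by (intro sum_block_weight_fact) simp
  also have "card ({1..p} - S) = p - card S"
    using assms finite_subset by (subst card_Diff_subset) auto
  finally show ?thesis .
qed

lemma finite_Part: "finite (Part p)"
  unfolding Part_def by (intro finitely_many_partition_on) simp

lemma sum_PiE_prod_abs_mobius_zeroPart:
  assumes "finite I" "S \<subseteq> {1..p}"
  shows "(\<Sum>\<delta>\<in>I \<rightarrow>\<^sub>E {\<sigma>. \<sigma> \<in> Part p \<and> (\<forall>s\<in>S. {s} \<in> \<sigma>)}.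
      \<Prod>k\<in>I. \<bar>mobius p (zeroPart p) (\<delta> k)\<bar>) = fact (p - card S) ^ card I"
proof -
  have "(\<Sum>\<delta>\<in>I \<rightarrow>\<^sub>E {\<sigma>. \<sigma> \<in> Part p \<and> (\<forall>s\<in>S. {s} \<in> \<sigma>)}.
      \<Prod>k\<in>I. \<bar>mobius p (zeroPart p) (\<delta> k)\<bar>) =
      (\<Prod>k\<in>I. \<Sum>\<sigma> | \<sigma> \<in> Part p \<and> (\<forall>s\<in>S. {s} \<in> \<sigma>). \<bar>mobius p (zeroPart p) \<sigma>\<bar>)"
    using assms(1) finite_Part by (intro prod_sum_PiE[symmetric]) auto
  then show ?thesis
    using assms(2) by (simp add: sum_abs_mobius_zeroPart_containing_singletons)
qed

theorem mainTheorem7: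
  fixes p d r :: nat
  assumes "p \<ge> 1" and "d \<ge> 1" and "r \<le> p"
  shows "(\<Sum>\<delta> \<in> {\<delta> \<in> ({1..d} \<rightarrow>\<^sub>E Part p).
              (\<forall>k \<in> {1..d}. \<delta> k \<noteq> zeroPart p) \<and> rfix p d \<delta> = r}.
            \<Prod>k = 1..d. \<bar>mobius p (zeroPart p) (\<delta> k)\<bar>)
         \<le> int (p choose r) * (int (fact (p - r))) ^ d"
proof -
  let ?X = "{\<delta> \<in> ({1..d} \<rightarrow>\<^sub>E Part p). (\<forall>k \<in> {1..d}. \<delta> k \<noteq> zeroPart p) \<and> rfix p d \<delta> = r}"
  let ?w = "\<lambda>\<delta>. \<Prod>k = 1..d. \<bar>mobius p (zeroPart p) (\<delta> k)\<bar>"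
  let ?fixed = "\<lambda>\<delta>. {s \<in> {1..p}. \<forall>k \<in> {1..d}. {s} \<in> \<delta> k}"
  let ?T = "\<lambda>S. {\<sigma>. \<sigma> \<in> Part p \<and> (\<forall>s\<in>S. {s} \<in> \<sigma>)}"
  let ?SS = "{S. S \<subseteq> {1..p} \<and> card S = r}"
  have "(\<Sum>\<delta>\<in>?X. ?w \<delta>) = (\<Sum>S\<in>?SS. \<Sum>\<delta> | \<delta> \<in> ?X \<and> ?fixed \<delta> = S. ?w \<delta>)"
    by (rule sum.group[symmetric]) (auto simp: rfix_def finite_PiE finite_Part)
  also have "\<dots> \<le> (\<Sum>S\<in>?SS. \<Sum>\<delta>\<in>{1..d} \<rightarrow>\<^sub>E ?T S. ?w \<delta>)"
  proof (intro sum_mono sum_mono2 prod_nonneg)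
    show "{\<delta>. \<delta> \<in> ?X \<and> ?fixed \<delta> = S} \<subseteq> {1..d} \<rightarrow>\<^sub>E ?T S" for S
      by (auto simp: PiE_def)
  qed (auto simp: finite_PiE finite_Part)
  also have "\<dots> = (\<Sum>S\<in>?SS. fact (p - r) ^ d)"
    by (intro sum.cong) (simp_all add: sum_PiE_prod_abs_mobius_zeroPart)
  also have "\<dots> = int (p choose r) * fact (p - r) ^ d"
    using n_subsets[of "{1..p}" r] by simp
  finally show ?thesis
    by simp
qed

end
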